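(* Let $q\ge 3$ be a prime power and let $P\subseteq[0,q-2]^n$ and $Q\subseteq[0,q-2]^m$ be integral convex polytopes. Then the join $P*Q\subseteq[0,q-2]^{n+m+1}$ satisfies $$N(P*Q)=\max\Big\{(q-1)^{n+m},\ N(P)(q-1)^{m+1},\ N(Q)(q-1)^{n+1},\ (q-1)N(P)N(Q)+\big((q-1)^n-N(P)\big)\big((q-1)^m-N(Q)\big)\Big\},$$ and consequently $$\delta(P*Q)=\min\Big\{1-\tfrac{1}{q-1},\ \delta(P),\ \delta(Q),\ \delta(P)+\delta(Q)-\delta(P)\delta(Q)\tfrac{q}{q-1}\Big\}.$$
   Context: The join of integral convex polytopes $P\subseteq\mathbb{R}^n$ and $Q\subseteq\mathbb{R}^m$ is $P*Q=\mathrm{conv}\big(\{(p,\mathbf{0}^m,0):p\in P\}\cup\{(\mathbf{0}^n,y,1):y\in Q\}\big)\subseteq\mathbb{R}^{n+m+1}$. For an integral convex polytope $P\subseteq[0,q-2]^n$, $\mathcal{L}_P=\mathrm{span}_{\mathbb{F}_q}\{x^p: p\in P\cap\mathbb{Z}^n\}$, $N(P)=\max_{0\neq f\in\mathcal{L}_P}|Z(f)|$ where $Z(f)$ is the set of zeros of $f$ in $(\mathbb{F}_q^\times)^n$, and $\delta(P)=\big((q-1)^n-N(P)\big)/(q-1)^n$ (computed with respect to the ambient dimension of the polytope; e.g. $(q-1)^{n+m+1}$ for $P*Q$). *)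

theory Defs
  imports "HOL-Analysis.Analysis"
begin

text \<open>Points of R^n are represented as functions nat => real that vanish at
  all indices >= n.  Exponent vectors in Z^n_{>=0} are functions nat => nat
  vanishing at indices >= n.\<close>

definition supp_lt :: "nat \<Rightarrow> (nat \<Rightarrow> 'b::zero) \<Rightarrow> bool" where
  "supp_lt n x \<longleftrightarrow> (\<forall>i\<ge>n. x i = 0)"

definition conv :: "(nat \<Rightarrow> real) set \<Rightarrow> (nat \<Rightarrow> real) set" where
  "conv S = {x. \<exists>F w. finite F \<and> F \<noteq> {} \<and> F \<subseteq> S \<and> (\<forall>v\<in>F. 0 \<le> w v) \<and>
                  sum w F = 1 \<and> x = (\<lambda>i. \<Sum>v\<in>F. w v * v i)}"

definition int_points :: "nat \<Rightarrow> (nat \<Rightarrow> real) set" where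
  "int_points n = {x. supp_lt n x \<and> (\<forall>i. x i \<in> \<int>)}"

definition integral_polytope :: "nat \<Rightarrow> (nat \<Rightarrow> real) set \<Rightarrow> bool" where
  "integral_polytope n P \<longleftrightarrow> (\<exists>V. finite V \<and> V \<noteq> {} \<and> V \<subseteq> int_points n \<and> P = conv V)"

definition box :: "nat \<Rightarrow> nat \<Rightarrow> (nat \<Rightarrow> real) set" where
  "box q n = {x. supp_lt n x \<and> (\<forall>i<n. 0 \<le> x i \<and> x i \<le> real q - 2)}"

text \<open>Join P*Q in R^{n+m+1}: coordinates 0..n-1 for P, n..n+m-1 for Q, n+m the extra one.\<close>
definition embL :: "nat \<Rightarrow> (nat \<Rightarrow> real) \<Rightarrow> (nat \<Rightarrow> real)" where
  "embL n p = (\<lambda>i. if i < n then p i else 0)"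

definition embR :: "nat \<Rightarrow> nat \<Rightarrow> (nat \<Rightarrow> real) \<Rightarrow> (nat \<Rightarrow> real)" where
  "embR n m y = (\<lambda>i. if i < n then 0 else if i < n + m then y (i - n)
                     else if i = n + m then 1 else 0)"

definition join :: "nat \<Rightarrow> nat \<Rightarrow> (nat \<Rightarrow> real) set \<Rightarrow> (nat \<Rightarrow> real) set \<Rightarrow> (nat \<Rightarrow> real) set" where
  "join n m P Q = conv (embL n ` P \<union> embR n m ` Q)"

text \<open>Lattice points P \<inter> Z^n (as exponent vectors; they are nonnegative since P lies in the box).\<close>
definition lattice_pts :: "nat \<Rightarrow> (nat \<Rightarrow> real) set \<Rightarrow> (nat \<Rightarrow> nat) set" where
  "lattice_pts n P = {p. supp_lt n p \<and> (\<lambda>i. real (p i)) \<in> P}"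

text \<open>An element of L_P is given by its coefficient function c, supported on the lattice
  points of P (monomials x^p with distinct p are linearly independent, so f = 0 iff c = 0).\<close>
definition LP_coeffs :: "'a itself \<Rightarrow> nat \<Rightarrow> (nat \<Rightarrow> real) set \<Rightarrow> ((nat \<Rightarrow> nat) \<Rightarrow> 'a::field) set" where
  "LP_coeffs _ n P = {c. \<forall>p. p \<notin> lattice_pts n P \<longrightarrow> c p = 0}"

definition poly_eval :: "nat \<Rightarrow> (nat \<Rightarrow> real) set \<Rightarrow> ((nat \<Rightarrow> nat) \<Rightarrow> 'a::field) \<Rightarrow> (nat \<Rightarrow> 'a) \<Rightarrow> 'a" where
  "poly_eval n P c x = (\<Sum>p\<in>lattice_pts n P. c p * (\<Prod>i<n. x i ^ p i))"

definition torus :: "nat \<Rightarrow> (nat \<Rightarrow> 'a::field) set" where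
  "torus n = {x. supp_lt n x \<and> (\<forall>i<n. x i \<noteq> 0)}"

definition zeros :: "nat \<Rightarrow> (nat \<Rightarrow> real) set \<Rightarrow> ((nat \<Rightarrow> nat) \<Rightarrow> 'a::field) \<Rightarrow> (nat \<Rightarrow> 'a) set" where
  "zeros n P c = {x \<in> torus n. poly_eval n P c x = 0}"

definition Nmax :: "'a::{finite,field} itself \<Rightarrow> nat \<Rightarrow> (nat \<Rightarrow> real) set \<Rightarrow> nat" where
  "Nmax T n P = Max {card (zeros n P c) | c. c \<in> LP_coeffs T n P \<and> (\<exists>p. c p \<noteq> 0)}"

definition delta :: "'a::{finite,field} itself \<Rightarrow> nat \<Rightarrow> (nat \<Rightarrow> real) set \<Rightarrow> real" where
  "delta T n P = (real ((CARD('a) - 1) ^ n) - real (Nmax T n P)) / real ((CARD('a) - 1) ^ n)"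

end

theory Submission
  imports Defs
begin

text \<open>
  The last coordinate of a point of P*Q lies in [0,1], so the lattice points of the join are
  those of P at height 0 and those of Q at height 1. Hence every f in L(P*Q) has the form
  f(x,y,z) = g(x) + z h(y) with g in L(P), h in L(Q) not both zero, and every such pair occurs.
  Counting the roots in z gives
    |Z(f)| = (q-1) |Z(g)| |Z(h)| + ((q-1)^n - |Z(g)|) ((q-1)^m - |Z(h)|),
  where |Z(g)| lies in [0, N(P)] or equals (q-1)^n (when g = 0), and likewise for h.
  The count is bilinear, so its maximum is attained at one of four corners, each realised by
  a monomial (no zeros), a maximiser, or zero.
\<close>

section \<open>Convex hulls\<close>

lemma conv_superset: "S \<subseteq> conv S"
proof
  fix x assume "x \<in> S"
  then show "x \<in> conv S" unfolding conv_def
    by (intro CollectI exI[of _ "{x}"] exI[of _ "\<lambda>_. 1::real"]) auto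
qed

text \<open>Weights extended by zero, so that several representations can be merged over the
  union of their supports.\<close>
lemma conv_weights:
  assumes "x \<in> conv S"
  obtains G u where "finite G" "G \<subseteq> S" "\<And>s. 0 \<le> u s" "\<And>s. s \<notin> G \<Longrightarrow> u s = 0"
    "sum u G = 1" "x = (\<lambda>i. \<Sum>s\<in>G. u s * s i)"
proof -
  obtain G w where G: "finite G" "G \<subseteq> S" "\<forall>s\<in>G. 0 \<le> w s" "sum w G = 1"
    and x: "x = (\<lambda>i. \<Sum>s\<in>G. w s * s i)"
    using assms unfolding conv_def by blast
  let ?u = "\<lambda>s. if s \<in> G then w s else 0"
  show thesis
  proof (rule that[of G ?u])
    show "sum ?u G = 1" "x = (\<lambda>i. \<Sum>s\<in>G. ?u s * s i)"
      using G(4) x by simp_all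
  qed (use G in auto)
qed

lemma conv_convex_combination:
  assumes F: "finite F" "F \<noteq> {}" and w: "\<forall>v\<in>F. 0 \<le> w v" "sum w F = 1"
    and \<phi>: "\<forall>v\<in>F. \<phi> v \<in> conv S"
  shows "(\<lambda>i. \<Sum>v\<in>F. w v * \<phi> v i) \<in> conv S"
proof -
  define rep where "rep v G u \<longleftrightarrow> finite G \<and> G \<subseteq> S \<and> (\<forall>s. 0 \<le> u s)
      \<and> (\<forall>s. s \<notin> G \<longrightarrow> u s = 0) \<and> sum u G = 1 \<and> \<phi> v = (\<lambda>i. \<Sum>s\<in>G. u s * s i)"
    for v G and u :: "(nat \<Rightarrow> real) \<Rightarrow> real"
  have "\<forall>v\<in>F. \<exists>G u. rep v G u"
  proof
    fix v assume "v \<in> F"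
    show "\<exists>G u. rep v G u"
      by (rule conv_weights[OF \<phi>[rule_format, OF \<open>v \<in> F\<close>]]) (unfold rep_def, blast)
  qed
  then obtain GG where "\<forall>v\<in>F. \<exists>u. rep v (GG v) u"
    by (rule bchoice[elim_format]) blast
  then obtain UU where "\<forall>v\<in>F. rep v (GG v) (UU v)"
    by (rule bchoice[elim_format]) blast
  then have GU: "finite (GG v) \<and> GG v \<subseteq> S \<and> (\<forall>s. 0 \<le> UU v s)
      \<and> (\<forall>s. s \<notin> GG v \<longrightarrow> UU v s = 0) \<and> sum (UU v) (GG v) = 1
      \<and> \<phi> v = (\<lambda>i. \<Sum>s\<in>GG v. UU v s * s i)" if "v \<in> F" for v
    using that unfolding rep_def by blast
  define G where "G = \<Union>(GG ` F)"
  define W where "W s = (\<Sum>v\<in>F. w v * UU v s)" for s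
  have "finite G" "G \<subseteq> S" unfolding G_def using F(1) GU by auto
  have "G \<noteq> {}"
    using F(2) GU by (force simp: G_def)
  have "\<forall>s\<in>G. 0 \<le> W s"
    using w(1) GU by (auto simp: W_def intro!: sum_nonneg)
  have restrict: "(\<Sum>s\<in>G. UU v s * h s) = (\<Sum>s\<in>GG v. UU v s * h s)" if "v \<in> F" for v h
    by (rule sum.mono_neutral_right) (use that GU[OF that] \<open>finite G\<close> in \<open>auto simp: G_def\<close>)
  have W_sum: "(\<Sum>s\<in>G. W s * h s) = (\<Sum>v\<in>F. w v * (\<Sum>s\<in>GG v. UU v s * h s))" for h
  proof -
    have "(\<Sum>s\<in>G. W s * h s) = (\<Sum>v\<in>F. w v * (\<Sum>s\<in>G. UU v s * h s))"
      unfolding W_def sum_distrib_right sum_distrib_left by (subst sum.swap) (simp add: mult.assoc)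
    also have "\<dots> = (\<Sum>v\<in>F. w v * (\<Sum>s\<in>GG v. UU v s * h s))"
      using restrict by simp
    finally show ?thesis .
  qed
  have "sum W G = 1"
    using W_sum[of "\<lambda>_. 1"] GU w(2) by simp
  moreover have "(\<lambda>i. \<Sum>v\<in>F. w v * \<phi> v i) = (\<lambda>i. \<Sum>s\<in>G. W s * s i)"
    using W_sum GU by simp
  ultimately show ?thesis
    using \<open>finite G\<close> \<open>G \<noteq> {}\<close> \<open>G \<subseteq> S\<close> \<open>\<forall>s\<in>G. 0 \<le> W s\<close> unfolding conv_def by blast
qed

lemma conv_conv: "conv (conv S) = conv S"
proof
  show "conv (conv S) \<subseteq> conv S"
  proof
    fix x assume "x \<in> conv (conv S)"
    then obtain F w where "finite F" "F \<noteq> {}" "F \<subseteq> conv S" "\<forall>v\<in>F. 0 \<le> w v" "sum w F = 1"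
      and "x = (\<lambda>i. \<Sum>v\<in>F. w v * v i)"
      unfolding conv_def by blast
    then show "x \<in> conv S"
      using conv_convex_combination[of F w "\<lambda>v. v" S] by blast
  qed
qed (rule conv_superset)

lemma conv_coordinate_const:
  assumes "\<forall>s\<in>S. s i = c" and "x \<in> conv S"
  shows "x i = c"
proof -
  obtain F w where "F \<subseteq> S" "sum w F = 1" "x = (\<lambda>i. \<Sum>v\<in>F. w v * v i)"
    using assms(2) unfolding conv_def by blast
  then have "x i = (\<Sum>v\<in>F. w v * c)"
    using assms(1) by (auto intro!: sum.cong)
  with \<open>sum w F = 1\<close> show ?thesis
    by (simp add: sum_distrib_right[symmetric])
qed

lemma conv_weight_support:
  assumes "finite F" "\<forall>v\<in>F. 0 \<le> w v" "sum w F = 1" "\<forall>v\<in>F. w v \<noteq> 0 \<longrightarrow> v \<in> T"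
  shows "(\<lambda>i. \<Sum>v\<in>F. w v * v i) \<in> conv T"
proof -
  define F' where "F' = {v \<in> F. w v \<noteq> 0}"
  have "F' \<subseteq> F" by (auto simp: F'_def)
  have sum_F': "(\<Sum>v\<in>F'. w v * h v) = (\<Sum>v\<in>F. w v * h v)" for h :: "_ \<Rightarrow> real"
    by (rule sum.mono_neutral_left) (use assms(1) in \<open>auto simp: F'_def\<close>)
  have "sum w F' = 1"
    using sum_F'[of "\<lambda>_. 1"] assms(3) by simp
  then have "F' \<noteq> {}" by auto
  moreover have "finite F'" "F' \<subseteq> T" "\<forall>v\<in>F'. 0 \<le> w v"
    using assms \<open>F' \<subseteq> F\<close> finite_subset by (auto simp: F'_def)
  moreover have "(\<lambda>i. \<Sum>v\<in>F. w v * v i) = (\<lambda>i. \<Sum>v\<in>F'. w v * v i)"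
    using sum_F' by simp
  ultimately show ?thesis
    unfolding conv_def using \<open>sum w F' = 1\<close> by blast
qed

lemma conv_union_slice:
  assumes x: "x \<in> conv (A \<union> B)" and A: "\<forall>a\<in>A. a i = 0" and B: "\<forall>b\<in>B. b i = 1"
  shows "0 \<le> x i" "x i \<le> 1" "x i = 0 \<Longrightarrow> x \<in> conv A" "x i = 1 \<Longrightarrow> x \<in> conv B"
proof -
  obtain F w where F: "finite F" "F \<subseteq> A \<union> B" and w: "\<forall>v\<in>F. 0 \<le> w v" "sum w F = 1"
    and x_eq: "x = (\<lambda>i. \<Sum>v\<in>F. w v * v i)"
    using x unfolding conv_def by blast
  have "x i = (\<Sum>v\<in>F. if v \<in> B then w v else 0)"
    unfolding x_eq using F(2) A B by (intro sum.cong) auto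
  then have xi: "x i = sum w (F \<inter> B)"
    using F(1) by (simp add: sum.inter_restrict)
  have split: "sum w F = sum w (F \<inter> B) + sum w (F - B)"
    using F(1) by (rule sum.Int_Diff)
  have "0 \<le> sum w (F \<inter> B)" "0 \<le> sum w (F - B)"
    using w(1) by (auto intro: sum_nonneg)
  then show "0 \<le> x i" "x i \<le> 1"
    using xi split w(2) by linarith+
  show "x \<in> conv A" if "x i = 0"
  proof -
    have "\<forall>v\<in>F \<inter> B. w v = 0"
      using that xi F(1) w(1) sum_nonneg_eq_0_iff[of "F \<inter> B" w] by auto
    then show ?thesis
      unfolding x_eq using F w by (intro conv_weight_support) auto
  qed
  show "x \<in> conv B" if "x i = 1"
  proof -
    have "\<forall>v\<in>F - B. w v = 0"
      using that xi split w F(1) sum_nonneg_eq_0_iff[of "F - B" w] by auto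
    then show ?thesis
      unfolding x_eq using F w by (intro conv_weight_support) auto
  qed
qed

section \<open>Lattice points of the join\<close>

lemma integral_polytope_conv_eq: "integral_polytope n P \<Longrightarrow> conv P = P"
  by (auto simp: integral_polytope_def conv_conv)

lemma box_supp_lt: "x \<in> box q n \<Longrightarrow> supp_lt n x"
  by (simp add: box_def)

lemma embL_supp_lt: "supp_lt n p \<Longrightarrow> embL n p = p"
  by (auto simp: embL_def supp_lt_def)

lemma conv_embR_image:
  assumes Q: "conv Q = Q" "\<forall>y\<in>Q. supp_lt m y"
  shows "conv (embR n m ` Q) = embR n m ` Q"
proof
  show "conv (embR n m ` Q) \<subseteq> embR n m ` Q"
  proof
    fix x assume x: "x \<in> conv (embR n m ` Q)"
    then obtain G u where G: "finite G" "G \<noteq> {}" "G \<subseteq> embR n m ` Q" "\<forall>s\<in>G. 0 \<le> u s"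
      "sum u G = 1" and x_eq: "x = (\<lambda>i. \<Sum>s\<in>G. u s * s i)"
      unfolding conv_def by blast
    define proj where "proj z = (\<lambda>j. if j < m then z (n + j) else 0)" for z :: "nat \<Rightarrow> real"
    have proj_embR: "proj (embR n m y) = y" if "y \<in> Q" for y
      using Q(2) that by (auto simp: proj_def embR_def supp_lt_def)
    have "proj x = (\<lambda>j. \<Sum>s\<in>G. u s * proj s j)"
      by (auto simp: proj_def x_eq)
    moreover have "\<forall>s\<in>G. proj s \<in> conv Q"
      using G(3) proj_embR Q(1) by auto
    ultimately have "proj x \<in> Q"
      using conv_convex_combination[of G u proj Q] G Q(1) by simp
    moreover have "x = embR n m (proj x)"
    proof
      fix i
      show "x i = embR n m (proj x) i"
      proof (cases "n \<le> i \<and> i < n + m")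
        case True
        then show ?thesis by (auto simp: embR_def proj_def)
      next
        case False
        then have "\<forall>s\<in>embR n m ` Q. s i = embR n m (\<lambda>_. 0) i"
          by (auto simp: embR_def)
        then have "x i = embR n m (\<lambda>_. 0) i"
          using x by (rule conv_coordinate_const)
        with False show ?thesis by (simp add: embR_def)
      qed
    qed
    ultimately show "x \<in> embR n m ` Q" by blast
  qed
qed (rule conv_superset)

lemma join_slices:
  assumes P: "conv P = P" "\<forall>p\<in>P. supp_lt n p" and Q: "conv Q = Q" "\<forall>y\<in>Q. supp_lt m y"
    and x: "x \<in> join n m P Q"
  shows "0 \<le> x (n + m)" "x (n + m) \<le> 1"
    "x (n + m) = 0 \<Longrightarrow> x \<in> P" "x (n + m) = 1 \<Longrightarrow> x \<in> embR n m ` Q"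
proof -
  have L: "embL n ` P = P"
    using P(2) by (force simp: embL_supp_lt)
  have x': "x \<in> conv (P \<union> embR n m ` Q)"
    using x by (simp add: join_def L)
  have "\<forall>p\<in>P. p (n + m) = 0" "\<forall>b\<in>embR n m ` Q. b (n + m) = 1"
    using P(2) by (auto simp: supp_lt_def embR_def)
  note slice = conv_union_slice[OF x' this]
  show "0 \<le> x (n + m)" "x (n + m) \<le> 1"
    by (fact slice(1), fact slice(2))
  show "x \<in> P" if "x (n + m) = 0"
    using slice(3)[OF that] P(1) by simp
  show "x \<in> embR n m ` Q" if "x (n + m) = 1"
    using slice(4)[OF that] conv_embR_image[OF Q] by simp
qed

definition embR_exp :: "nat \<Rightarrow> nat \<Rightarrow> (nat \<Rightarrow> nat) \<Rightarrow> nat \<Rightarrow> nat" where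
  "embR_exp n m y = (\<lambda>i. if i < n then 0 else if i < n + m then y (i - n)
                         else if i = n + m then 1 else 0)"

lemma of_nat_embR_exp: "real (embR_exp n m y i) = embR n m (\<lambda>j. real (y j)) i"
  by (auto simp: embR_exp_def embR_def)

lemma lattice_pts_supp_lt: "p \<in> lattice_pts n P \<Longrightarrow> supp_lt n p"
  by (simp add: lattice_pts_def)

lemma embR_exp_lattice_pt:
  assumes r: "(\<lambda>i. real (r i)) = embR n m y" and y: "y \<in> Q" "supp_lt m y"
  shows "r \<in> embR_exp n m ` lattice_pts m Q"
proof
  define y' where "y' j = (if j < m then r (n + j) else 0)" for j
  have y'_y: "(\<lambda>j. real (y' j)) = y"
  proof
    fix j
    show "real (y' j) = y j"
      using fun_cong[OF r, of "n + j"] y(2) by (auto simp: y'_def embR_def supp_lt_def)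
  qed
  then show "y' \<in> lattice_pts m Q"
    using y(1) by (simp add: lattice_pts_def supp_lt_def y'_def)
  show "r = embR_exp n m y'"
  proof
    fix i
    have "real (r i) = real (embR_exp n m y' i)"
      using fun_cong[OF r, of i] by (simp add: of_nat_embR_exp y'_y)
    then show "r i = embR_exp n m y' i"
      by simp
  qed
qed

lemma lattice_pts_join:
  assumes P: "conv P = P" "\<forall>p\<in>P. supp_lt n p" and Q: "conv Q = Q" "\<forall>y\<in>Q. supp_lt m y"
  shows "lattice_pts (n + m + 1) (join n m P Q) = lattice_pts n P \<union> embR_exp n m ` lattice_pts m Q"
proof
  have P_join: "P \<subseteq> join n m P Q" and Q_join: "embR n m ` Q \<subseteq> join n m P Q"
    using conv_superset[of "embL n ` P \<union> embR n m ` Q"] P(2)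
    by (force simp: join_def embL_supp_lt)+
  show "lattice_pts (n + m + 1) (join n m P Q) \<subseteq> lattice_pts n P \<union> embR_exp n m ` lattice_pts m Q"
  proof
    fix r assume "r \<in> lattice_pts (n + m + 1) (join n m P Q)"
    then have r: "supp_lt (n + m + 1) r" and x: "(\<lambda>i. real (r i)) \<in> join n m P Q"
      by (auto simp: lattice_pts_def)
    note slices = join_slices[OF P Q x]
    have "r (n + m) = 0 \<or> r (n + m) = 1"
      using slices(2) by linarith
    then show "r \<in> lattice_pts n P \<union> embR_exp n m ` lattice_pts m Q"
    proof
      assume "r (n + m) = 0"
      then have "(\<lambda>i. real (r i)) \<in> P"
        using slices(3) by simp
      moreover from this have "supp_lt n r"
        using P(2) by (auto simp: supp_lt_def)
      ultimately show ?thesis by (simp add: lattice_pts_def)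
    next
      assume "r (n + m) = 1"
      then obtain y where "y \<in> Q" "(\<lambda>i. real (r i)) = embR n m y"
        using slices(4) by auto
      then have "r \<in> embR_exp n m ` lattice_pts m Q"
        using Q(2) embR_exp_lattice_pt by blast
      then show ?thesis ..
    qed
  qed
  show "lattice_pts n P \<union> embR_exp n m ` lattice_pts m Q \<subseteq> lattice_pts (n + m + 1) (join n m P Q)"
  proof (rule Un_least)
    show "lattice_pts n P \<subseteq> lattice_pts (n + m + 1) (join n m P Q)"
      using P_join by (auto simp: lattice_pts_def supp_lt_def)
    show "embR_exp n m ` lattice_pts m Q \<subseteq> lattice_pts (n + m + 1) (join n m P Q)"
    proof
      fix r assume "r \<in> embR_exp n m ` lattice_pts m Q"
      then obtain y where y: "y \<in> lattice_pts m Q" and r: "r = embR_exp n m y"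
        by blast
      have "(\<lambda>i. real (r i)) = embR n m (\<lambda>j. real (y j))"
        by (simp add: r of_nat_embR_exp)
      then have "(\<lambda>i. real (r i)) \<in> join n m P Q"
        using Q_join y by (auto simp: lattice_pts_def)
      moreover have "supp_lt (n + m + 1) r"
        by (simp add: r supp_lt_def embR_exp_def)
      ultimately show "r \<in> lattice_pts (n + m + 1) (join n m P Q)"
        by (simp add: lattice_pts_def)
    qed
  qed
qed

section \<open>Finiteness and the torus\<close>

lemma finite_supp_lt_funcset:
  assumes "finite B"
  shows "finite {x :: nat \<Rightarrow> 'b::zero. supp_lt n x \<and> (\<forall>i<n. x i \<in> B)}"
proof (induction n)
  case 0
  have "{x :: nat \<Rightarrow> 'b. supp_lt 0 x \<and> (\<forall>i<0. x i \<in> B)} \<subseteq> {\<lambda>_. 0}"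
    by (auto simp: supp_lt_def)
  then show ?case by (rule finite_subset) simp
next
  case (Suc n)
  let ?S = "\<lambda>n. {x :: nat \<Rightarrow> 'b. supp_lt n x \<and> (\<forall>i<n. x i \<in> B)}"
  have "?S (Suc n) \<subseteq> (\<lambda>(x, z). x(n := z)) ` (?S n \<times> B)"
  proof
    fix x assume x: "x \<in> ?S (Suc n)"
    have "x = (\<lambda>(x, z). x(n := z)) (x(n := 0), x n)" by simp
    moreover have "(x(n := 0), x n) \<in> ?S n \<times> B"
      using x by (auto simp: supp_lt_def)
    ultimately show "x \<in> (\<lambda>(x, z). x(n := z)) ` (?S n \<times> B)" by blast
  qed
  moreover have "finite ((\<lambda>(x, z). x(n := z)) ` (?S n \<times> B))"
    using Suc assms by simp
  ultimately show ?case by (rule finite_subset)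
qed

lemma finite_torus: "finite (torus n :: (nat \<Rightarrow> 'a::{finite,field}) set)"
  by (rule finite_subset[OF _ finite_supp_lt_funcset[of "UNIV :: 'a set" n]]) (auto simp: torus_def)

lemma finite_lattice_pts:
  assumes "P \<subseteq> box q n"
  shows "finite (lattice_pts n P)"
proof (rule finite_subset[OF _ finite_supp_lt_funcset[of "{..q}" n]])
  show "lattice_pts n P \<subseteq> {p. supp_lt n p \<and> (\<forall>i<n. p i \<in> {..q})}"
    using assms by (force simp: lattice_pts_def box_def)
qed simp

lemma lattice_pts_nonempty:
  assumes "integral_polytope n P" "P \<subseteq> box q n"
  shows "lattice_pts n P \<noteq> {}"
proof -
  obtain V where V: "V \<noteq> {}" "V \<subseteq> int_points n" "P = conv V"
    using assms(1) by (auto simp: integral_polytope_def)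
  then obtain v where v: "v \<in> V" "v \<in> P" "v \<in> box q n"
    using conv_superset assms(2) by blast
  define p where "p i = nat \<lfloor>v i\<rfloor>" for i
  have "(\<lambda>i. real (p i)) = v"
  proof
    fix i
    have "v i \<in> \<int>" "0 \<le> v i"
      using v V(2) by (cases "i < n"; auto simp: int_points_def box_def supp_lt_def)+
    then show "real (p i) = v i"
      unfolding p_def by (metis Ints_cases floor_of_int of_int_0_le_iff of_nat_nat)
  qed
  moreover have "supp_lt n p"
    using v(3) by (auto simp: box_def supp_lt_def p_def)
  ultimately have "p \<in> lattice_pts n P"
    using v(2) by (simp add: lattice_pts_def)
  then show ?thesis by blast
qed

definition join_point :: "nat \<Rightarrow> nat \<Rightarrow> ((nat \<Rightarrow> 'a) \<times> (nat \<Rightarrow> 'a)) \<times> 'a \<Rightarrow> nat \<Rightarrow> 'a::zero" where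
  "join_point n m = (\<lambda>((a, b), z) i. if i < n then a i else if i < n + m then b (i - n)
                                     else if i = n + m then z else 0)"

lemma bij_betw_join_point:
  "bij_betw (join_point n m) ((torus n \<times> torus m) \<times> {z::'a::field. z \<noteq> 0}) (torus (n + m + 1))"
proof (rule bij_betw_byWitness[where f' = "\<lambda>x. (((\<lambda>i. if i < n then x i else 0),
                                             (\<lambda>j. if j < m then x (n + j) else 0)), x (n + m))"])
  show "\<forall>t\<in>(torus n \<times> torus m) \<times> {z::'a. z \<noteq> 0}.
      (((\<lambda>i. if i < n then join_point n m t i else 0),
        (\<lambda>j. if j < m then join_point n m t (n + j) else 0)), join_point n m t (n + m)) = t"
    by (fastforce simp: join_point_def torus_def supp_lt_def)
qed (auto simp: join_point_def torus_def supp_lt_def split: if_split_asm)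

lemma card_nonzero: "card {z::'a::{finite,field}. z \<noteq> 0} = CARD('a) - 1"
proof -
  have "{z::'a. z \<noteq> 0} = UNIV - {0}" by auto
  then show ?thesis by (simp add: card_Diff_singleton)
qed

lemma card_torus: "card (torus n :: (nat \<Rightarrow> 'a::{finite,field}) set) = (CARD('a) - 1) ^ n"
proof -
  have torus_0: "torus 0 = {(\<lambda>_. 0) :: nat \<Rightarrow> 'a}"
    by (auto simp: torus_def supp_lt_def)
  show ?thesis
  proof (induction n)
    case (Suc n)
    have "card (((torus n :: (nat \<Rightarrow> 'a) set) \<times> (torus 0 :: (nat \<Rightarrow> 'a) set)) \<times> {z::'a. z \<noteq> 0})
        = card (torus (n + 0 + 1) :: (nat \<Rightarrow> 'a) set)"
      using bij_betw_join_point[of n 0] by (rule bij_betw_same_card)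
    then show ?case
      using Suc torus_0 by (simp add: card_cartesian_product card_nonzero mult.commute)
  qed (simp add: torus_0)
qed

section \<open>Polynomials on the join\<close>

text \<open>On the torus of the join, f = g(x) + z h(y), where g and h have the coefficients
  \<open>coeff_left\<close> and \<open>coeff_right\<close>.\<close>

definition coeff_left :: "nat \<Rightarrow> (nat \<Rightarrow> real) set \<Rightarrow> ((nat \<Rightarrow> nat) \<Rightarrow> 'a::zero) \<Rightarrow> (nat \<Rightarrow> nat) \<Rightarrow> 'a" where
  "coeff_left n P c p = (if p \<in> lattice_pts n P then c p else 0)"

definition coeff_right :: "nat \<Rightarrow> nat \<Rightarrow> (nat \<Rightarrow> real) set \<Rightarrow> ((nat \<Rightarrow> nat) \<Rightarrow> 'a::zero) \<Rightarrow> (nat \<Rightarrow> nat) \<Rightarrow> 'a" where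
  "coeff_right n m Q c y = (if y \<in> lattice_pts m Q then c (embR_exp n m y) else 0)"

lemma inj_on_embR_exp: "inj_on (embR_exp n m) {y. supp_lt m y}"
proof
  fix y y' assume "y \<in> {y. supp_lt m y}" "y' \<in> {y. supp_lt m y}" and eq: "embR_exp n m y = embR_exp n m y'"
  then have supp: "supp_lt m y" "supp_lt m y'" by simp_all
  show "y = y'"
  proof
    fix j
    show "y j = y' j"
      using fun_cong[OF eq, of "n + j"] supp
      by (cases "j < m") (auto simp: embR_exp_def supp_lt_def)
  qed
qed

lemma monomial_join_point_left:
  assumes "supp_lt n p"
  shows "(\<Prod>i<n + m + 1. join_point n m ((a, b), z) i ^ p i) = (\<Prod>i<n. a i ^ p i)"
  by (rule prod.mono_neutral_cong_right) (use assms in \<open>auto simp: supp_lt_def join_point_def\<close>)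

lemma monomial_join_point_right:
  fixes z :: "'a::comm_semiring_1"
  shows "(\<Prod>i<n + m + 1. join_point n m ((a, b), z) i ^ embR_exp n m y i) = z * (\<Prod>j<m. b j ^ y j)"
proof -
  let ?h = "\<lambda>i. join_point n m ((a, b), z) i ^ embR_exp n m y i"
  have "(\<Prod>i<n + m + 1. ?h i) = (\<Prod>i<n + m. ?h i) * z"
    by (simp add: join_point_def embR_exp_def)
  also have "(\<Prod>i<n + m. ?h i) = (\<Prod>i\<in>{n..<n + m}. ?h i)"
    by (rule prod.mono_neutral_cong_right) (auto simp: embR_exp_def)
  also have "\<dots> = (\<Prod>j<m. ?h (j + n))"
    using prod.shift_bounds_nat_ivl[of ?h 0 n m] by (simp add: add.commute lessThan_atLeast0)
  also have "\<dots> = (\<Prod>j<m. b j ^ y j)"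
    by (simp add: join_point_def embR_exp_def)
  finally show ?thesis by (simp add: mult.commute)
qed

lemma poly_eval_join_point:
  fixes c :: "(nat \<Rightarrow> nat) \<Rightarrow> 'a::field"
  assumes LJ: "lattice_pts (n + m + 1) J = lattice_pts n P \<union> embR_exp n m ` lattice_pts m Q"
    and fin: "finite (lattice_pts n P)" "finite (lattice_pts m Q)"
  shows "poly_eval (n + m + 1) J c (join_point n m ((a, b), z)) =
         poly_eval n P (coeff_left n P c) a + z * poly_eval m Q (coeff_right n m Q c) b"
proof -
  let ?LP = "lattice_pts n P" and ?LQ = "lattice_pts m Q"
  let ?g = "\<lambda>p. c p * (\<Prod>i<n + m + 1. join_point n m ((a, b), z) i ^ p i)"
  have "p (n + m) = 0" if "p \<in> ?LP" for p
    using lattice_pts_supp_lt[OF that] by (simp add: supp_lt_def)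
  then have "?LP \<inter> embR_exp n m ` ?LQ = {}"
    by (force simp: embR_exp_def)
  then have "poly_eval (n + m + 1) J c (join_point n m ((a, b), z)) =
      sum ?g ?LP + sum ?g (embR_exp n m ` ?LQ)"
    unfolding poly_eval_def LJ using fin by (simp add: sum.union_disjoint)
  also have "sum ?g (embR_exp n m ` ?LQ) = sum (?g \<circ> embR_exp n m) ?LQ"
    by (rule sum.reindex, rule inj_on_subset[OF inj_on_embR_exp]) (auto dest: lattice_pts_supp_lt)
  also have "\<dots> = z * poly_eval m Q (coeff_right n m Q c) b"
    unfolding poly_eval_def sum_distrib_left comp_def monomial_join_point_right
    by (rule sum.cong) (simp_all add: coeff_right_def mult_ac)
  also have "sum ?g ?LP = poly_eval n P (coeff_left n P c) a"
    unfolding poly_eval_def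
  proof (rule sum.cong)
    fix p assume "p \<in> ?LP"
    then show "?g p = coeff_left n P c p * (\<Prod>i<n. a i ^ p i)"
      using monomial_join_point_left[OF lattice_pts_supp_lt, of p n P m a b z] by (simp add: coeff_left_def)
  qed simp
  finally show ?thesis .
qed

lemma card_nonzero_solutions:
  fixes g h :: "'a::{finite,field}"
  shows "card {z. z \<noteq> 0 \<and> g + z * h = 0}
    = (CARD('a) - 1) * of_bool (g = 0) * of_bool (h = 0) + of_bool (g \<noteq> 0) * of_bool (h \<noteq> 0)"
proof -
  have "{z. z \<noteq> 0 \<and> g + z * h = 0} =
      (if h = 0 then (if g = 0 then {z. z \<noteq> 0} else {}) else if g = 0 then {} else {- g / h})"
    by (auto simp: field_simps add_eq_0_iff)
  then show ?thesis by (simp add: card_nonzero)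
qed

lemma card_zeros_join_sum:
  fixes c :: "(nat \<Rightarrow> nat) \<Rightarrow> 'a::{finite,field}"
  assumes LJ: "lattice_pts (n + m + 1) J = lattice_pts n P \<union> embR_exp n m ` lattice_pts m Q"
    and fin: "finite (lattice_pts n P)" "finite (lattice_pts m Q)"
  defines "G \<equiv> poly_eval n P (coeff_left n P c)" and "H \<equiv> poly_eval m Q (coeff_right n m Q c)"
  shows "card (zeros (n + m + 1) J c) =
    (\<Sum>a\<in>torus n. \<Sum>b\<in>torus m. card {z. z \<noteq> 0 \<and> G a + z * H b = 0})"
proof -
  define X where "X = (((torus n :: (nat \<Rightarrow> 'a) set) \<times> (torus m :: (nat \<Rightarrow> 'a) set)) \<times> {z::'a. z \<noteq> 0})"
  define Y where "Y = (SIGMA ab:torus n \<times> torus m. {z::'a. z \<noteq> 0 \<and> G (fst ab) + z * H (snd ab) = 0})"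
  have bij: "bij_betw (join_point n m) X (torus (n + m + 1))"
    unfolding X_def by (rule bij_betw_join_point)
  have "poly_eval (n + m + 1) J c (join_point n m ((a, b), z)) = G a + z * H b" for a b z
    unfolding G_def H_def by (rule poly_eval_join_point[OF LJ fin])
  then have "Y = {t \<in> X. poly_eval (n + m + 1) J c (join_point n m t) = 0}"
    by (auto simp: X_def Y_def)
  then have "zeros (n + m + 1) J c = join_point n m ` Y"
    using bij_betw_imp_surj_on[OF bij] by (auto simp: zeros_def)
  moreover have "inj_on (join_point n m) Y"
    using bij_betw_imp_inj_on[OF bij] by (rule inj_on_subset) (auto simp: X_def Y_def)
  ultimately have "card (zeros (n + m + 1) J c) = card Y"
    by (simp add: card_image)
  also have "\<dots> = (\<Sum>ab\<in>torus n \<times> torus m. card {z. z \<noteq> 0 \<and> G (fst ab) + z * H (snd ab) = 0})"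
    unfolding Y_def by (rule card_SigmaI) (simp_all add: finite_torus)
  also have "\<dots> = (\<Sum>a\<in>torus n. \<Sum>b\<in>torus m. card {z. z \<noteq> 0 \<and> G a + z * H b = 0})"
    by (simp only: sum.cartesian_product' fst_conv snd_conv)
  finally show ?thesis .
qed

lemma card_zeros_eq_sum:
  "card (zeros n P (c :: (nat \<Rightarrow> nat) \<Rightarrow> 'a::{finite,field})) =
    (\<Sum>a\<in>torus n. of_bool (poly_eval n P c a = 0))"
  by (simp add: sum_of_bool_eq finite_torus zeros_def Int_def conj_commute)

lemma card_nonzeros_eq_sum:
  "card (torus n :: (nat \<Rightarrow> 'a) set) - card (zeros n P (c :: (nat \<Rightarrow> nat) \<Rightarrow> 'a::{finite,field})) =
    (\<Sum>a\<in>torus n. of_bool (poly_eval n P c a \<noteq> 0))"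
proof -
  have "torus n \<inter> {a. poly_eval n P c a \<noteq> 0} = torus n - zeros n P c"
    by (auto simp: zeros_def)
  then show ?thesis
    by (simp add: sum_of_bool_eq finite_torus card_Diff_subset zeros_def)
qed

text \<open>The number of zeros of g(x) + z h(y) when k = q - 1, the tori have A and B points,
  and g, h have a and b zeros.\<close>
definition join_count :: "nat \<Rightarrow> nat \<Rightarrow> nat \<Rightarrow> nat \<Rightarrow> nat \<Rightarrow> int" where
  "join_count k A B a b = int k * int a * int b + (int A - int a) * (int B - int b)"

lemma card_zeros_le_card_torus:
  "card (zeros n P (c :: (nat \<Rightarrow> nat) \<Rightarrow> 'a::{finite,field})) \<le> card (torus n :: (nat \<Rightarrow> 'a) set)"
  by (rule card_mono[OF finite_torus]) (auto simp: zeros_def)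

lemma card_zeros_join:
  fixes c :: "(nat \<Rightarrow> nat) \<Rightarrow> 'a::{finite,field}"
  assumes LJ: "lattice_pts (n + m + 1) J = lattice_pts n P \<union> embR_exp n m ` lattice_pts m Q"
    and fin: "finite (lattice_pts n P)" "finite (lattice_pts m Q)"
  shows "int (card (zeros (n + m + 1) J c)) =
    join_count (CARD('a) - 1) ((CARD('a) - 1) ^ n) ((CARD('a) - 1) ^ m)
      (card (zeros n P (coeff_left n P c))) (card (zeros m Q (coeff_right n m Q c)))"
proof -
  let ?k = "CARD('a) - 1" and ?cP = "coeff_left n P c" and ?cQ = "coeff_right n m Q c"
  let ?G = "poly_eval n P ?cP" and ?H = "poly_eval m Q ?cQ"
  have "card (zeros (n + m + 1) J c) = (\<Sum>a\<in>torus n. \<Sum>b\<in>torus m.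
      ?k * of_bool (?G a = 0) * of_bool (?H b = 0) + of_bool (?G a \<noteq> 0) * of_bool (?H b \<noteq> 0))"
    unfolding card_zeros_join_sum[OF LJ fin] card_nonzero_solutions ..
  also have "\<dots> = ?k * (\<Sum>a\<in>torus n. of_bool (?G a = 0)) * (\<Sum>b\<in>torus m. of_bool (?H b = 0))
      + (\<Sum>a\<in>torus n. of_bool (?G a \<noteq> 0)) * (\<Sum>b\<in>torus m. of_bool (?H b \<noteq> 0))"
    by (simp only: sum_product mult.assoc) (simp only: sum_distrib_left sum.distrib)
  also have "\<dots> = ?k * card (zeros n P ?cP) * card (zeros m Q ?cQ)
      + (card (torus n :: (nat \<Rightarrow> 'a) set) - card (zeros n P ?cP))
        * (card (torus m :: (nat \<Rightarrow> 'a) set) - card (zeros m Q ?cQ))"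
    by (simp only: card_zeros_eq_sum[symmetric] card_nonzeros_eq_sum[symmetric])
  finally show ?thesis
    using card_zeros_le_card_torus[of n P ?cP] card_zeros_le_card_torus[of m Q ?cQ]
    by (simp add: join_count_def card_torus of_nat_diff)
qed

section \<open>The maximal number of zeros\<close>

lemma zeros_zero_coeffs: "zeros n P (\<lambda>_. 0 :: 'a::field) = torus n"
  by (auto simp: zeros_def poly_eval_def)

lemma zeros_monomial:
  assumes "finite (lattice_pts n P)" "p0 \<in> lattice_pts n P"
  shows "zeros n P (\<lambda>p. if p = p0 then 1 else 0 :: 'a::field) = {}"
proof -
  have "poly_eval n P (\<lambda>p. if p = p0 then 1 else 0) x = (\<Prod>i<n. x i ^ p0 i)" for x :: "nat \<Rightarrow> 'a"
    using assms by (simp add: poly_eval_def if_distrib[of "\<lambda>c. c * _"] cong: if_cong)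
  then show ?thesis
    by (auto simp: zeros_def torus_def)
qed

lemma
  fixes P :: "(nat \<Rightarrow> real) set"
  assumes fin: "finite (lattice_pts n P)" and ne: "lattice_pts n P \<noteq> {}"
  shows card_zeros_le_Nmax: "\<And>c. c \<in> LP_coeffs TYPE('a::{finite,field}) n P \<Longrightarrow> \<exists>p. c p \<noteq> 0 \<Longrightarrow>
      card (zeros n P c) \<le> Nmax TYPE('a) n P"
    and Nmax_attained: "\<exists>c \<in> LP_coeffs TYPE('a) n P. (\<exists>p. c p \<noteq> 0) \<and> card (zeros n P c) = Nmax TYPE('a) n P"
    and exists_zero_free: "\<exists>c \<in> LP_coeffs TYPE('a) n P. (\<exists>p. c p \<noteq> 0) \<and> card (zeros n P c) = 0"
proof -
  define S where "S = {card (zeros n P c) | c. c \<in> LP_coeffs TYPE('a) n P \<and> (\<exists>p. c p \<noteq> 0)}"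
  have "S \<subseteq> {..card (torus n :: (nat \<Rightarrow> 'a) set)}"
    by (auto simp: S_def card_zeros_le_card_torus)
  then have "finite S"
    by (rule finite_subset) simp
  obtain p0 where p0: "p0 \<in> lattice_pts n P"
    using ne by blast
  let ?mono = "\<lambda>p. if p = p0 then 1 else 0 :: 'a"
  have mono: "?mono \<in> LP_coeffs TYPE('a) n P" "\<exists>p. ?mono p \<noteq> 0" "card (zeros n P ?mono) = 0"
    using p0 zeros_monomial[OF fin p0, where 'a='a] by (auto simp: LP_coeffs_def intro: exI[of _ p0])
  then show "\<exists>c \<in> LP_coeffs TYPE('a) n P. (\<exists>p. c p \<noteq> 0) \<and> card (zeros n P c) = 0"
    by (intro bexI[of _ ?mono] conjI)
  have "card (zeros n P ?mono) \<in> S"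
    unfolding S_def by (rule CollectI, rule exI[of _ ?mono]) (use mono in auto)
  then have "S \<noteq> {}" by blast
  show "card (zeros n P c) \<le> Nmax TYPE('a) n P" if "c \<in> LP_coeffs TYPE('a) n P" "\<exists>p. c p \<noteq> 0" for c
  proof -
    have "card (zeros n P c) \<in> S"
      unfolding S_def using that by blast
    then show ?thesis
      unfolding Nmax_def S_def[symmetric] using \<open>finite S\<close> by (rule Max_ge[rotated])
  qed
  have "\<exists>c. c \<in> LP_coeffs TYPE('a) n P \<and> (\<exists>p. c p \<noteq> 0) \<and> card (zeros n P c) = x" if "x \<in> S" for x
    using that unfolding S_def by blast
  then obtain c where "c \<in> LP_coeffs TYPE('a) n P" "\<exists>p. c p \<noteq> 0" "card (zeros n P c) = Max S"
    using Max_in[OF \<open>finite S\<close> \<open>S \<noteq> {}\<close>] by blast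
  then show "\<exists>c \<in> LP_coeffs TYPE('a) n P. (\<exists>p. c p \<noteq> 0) \<and> card (zeros n P c) = Nmax TYPE('a) n P"
    unfolding Nmax_def S_def[symmetric] by (intro bexI[of _ c] conjI)
qed

lemma Nmax_le_card_torus:
  assumes "finite (lattice_pts n P)" "lattice_pts n P \<noteq> {}"
  shows "Nmax TYPE('a::{finite,field}) n P \<le> (CARD('a) - 1) ^ n"
proof -
  obtain c :: "(nat \<Rightarrow> nat) \<Rightarrow> 'a" where "card (zeros n P c) = Nmax TYPE('a) n P"
    using Nmax_attained[OF assms] by blast
  then show ?thesis
    using card_zeros_le_card_torus[of n P c] by (simp add: card_torus)
qed

lemma card_zeros_cases:
  assumes "finite (lattice_pts n P)" "lattice_pts n P \<noteq> {}" "c \<in> LP_coeffs TYPE('a::{finite,field}) n P"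
  shows "if \<exists>p. c p \<noteq> 0 then card (zeros n P c) \<le> Nmax TYPE('a) n P
         else card (zeros n P c) = (CARD('a) - 1) ^ n"
proof (cases "\<exists>p. c p \<noteq> 0")
  case True
  then show ?thesis
    using card_zeros_le_Nmax[OF assms] by simp
next
  case False
  then have "c = (\<lambda>_. 0)" by auto
  with False show ?thesis
    by (simp add: zeros_zero_coeffs card_torus)
qed

lemma join_count_le_max_corners:
  assumes "a \<le> NP" "NP \<le> A" "b \<le> NQ" "NQ \<le> B"
  shows "join_count k A B a b \<le> max (join_count k A B 0 0) (join_count k A B NP NQ)"
proof -
  let ?f = "join_count k A B"
  have d1: "?f NP b - ?f a b = (int NP - a) * ((k + 1) * int b - B)"
    and d2: "?f 0 b - ?f a b = a * (int B - (k + 1) * int b)"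
    and d3: "?f NP NQ - ?f NP b = (int NQ - b) * ((k + 1) * int NP - A)"
    and d4: "?f NP 0 - ?f NP b = b * (int A - (k + 1) * int NP)"
    by (simp_all add: join_count_def algebra_simps)
  \<comment> \<open>The count is affine in each argument; the signs of these increments decide which end wins.\<close>
  have e1: "?f NP 0 \<le> ?f 0 0" and e2: "?f 0 b \<le> ?f 0 0"
    using assms by (simp_all add: join_count_def algebra_simps)
  show ?thesis
  proof (cases "(k + 1) * int b \<ge> B")
    case True
    have "0 \<le> (int NP - a) * ((k + 1) * int b - B)"
      using True assms by simp
    then have "?f a b \<le> ?f NP b"
      using d1 by linarith
    moreover have "?f NP b \<le> max (?f NP 0) (?f NP NQ)"
    proof (cases "(k + 1) * int NP \<ge> A")
      case True
      have "0 \<le> (int NQ - b) * ((k + 1) * int NP - A)"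
        using True assms by simp
      then show ?thesis
        using d3 by linarith
    next
      case False
      have "0 \<le> b * (int A - (k + 1) * int NP)"
        using False by simp
      then show ?thesis
        using d4 by linarith
    qed
    ultimately show ?thesis
      using e1 by linarith
  next
    case False
    have "0 \<le> a * (int B - (k + 1) * int b)"
      using False by simp
    then show ?thesis
      using d2 e2 by linarith
  qed
qed

definition join_max_count :: "nat \<Rightarrow> nat \<Rightarrow> nat \<Rightarrow> nat \<Rightarrow> nat \<Rightarrow> int" where
  "join_max_count k A B NP NQ = max (max (join_count k A B 0 0) (join_count k A B NP B))
                                   (max (join_count k A B A NQ) (join_count k A B NP NQ))"

lemma join_count_le_join_max_count:
  assumes a: "if left then a \<le> NP else a = A" and b: "if right then b \<le> NQ else b = B"
    and "left \<or> right" "NP \<le> A" "NQ \<le> B"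
  shows "join_count k A B a b \<le> join_max_count k A B NP NQ"
proof -
  consider "left" "right" | "left" "\<not> right" | "\<not> left" "right"
    using \<open>left \<or> right\<close> by blast
  then have "join_count k A B a b \<le> max (join_count k A B 0 0) (join_count k A B NP NQ)
      \<or> join_count k A B a b \<le> join_count k A B NP B \<or> join_count k A B a b \<le> join_count k A B A NQ"
  proof cases
    case 1
    then show ?thesis
      using a b assms(4,5) join_count_le_max_corners by simp
  next
    case 2
    then show ?thesis
      using a b by (simp add: join_count_def mult_left_mono mult_right_mono)
  next
    case 3
    then show ?thesis
      using a b by (simp add: join_count_def mult_left_mono)
  qed
  then show ?thesis
    unfolding join_max_count_def by linarith
qed

lemma coeff_left_in_LP_coeffs: "coeff_left n P c \<in> LP_coeffs T n P"
  by (simp add: coeff_left_def LP_coeffs_def)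

lemma coeff_right_in_LP_coeffs: "coeff_right n m Q c \<in> LP_coeffs T m Q"
  by (simp add: coeff_right_def LP_coeffs_def)

context
  fixes n m :: nat and P Q J :: "(nat \<Rightarrow> real) set"
  assumes lattice_pts_J: "lattice_pts (n + m + 1) J = lattice_pts n P \<union> embR_exp n m ` lattice_pts m Q"
    and finite_P: "finite (lattice_pts n P)" and finite_Q: "finite (lattice_pts m Q)"
    and nonempty_P: "lattice_pts n P \<noteq> {}" and nonempty_Q: "lattice_pts m Q \<noteq> {}"
begin

lemma LP_coeffs_join_nonzero_iff:
  assumes "c \<in> LP_coeffs T (n + m + 1) J"
  shows "(\<exists>p. c p \<noteq> 0) \<longleftrightarrow> (\<exists>p. coeff_left n P c p \<noteq> 0) \<or> (\<exists>y. coeff_right n m Q c y \<noteq> 0)"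
proof
  assume "\<exists>p. c p \<noteq> 0"
  then obtain p where p: "c p \<noteq> 0" by blast
  then have "p \<in> lattice_pts n P \<union> embR_exp n m ` lattice_pts m Q"
    using assms lattice_pts_J by (auto simp: LP_coeffs_def)
  then show "(\<exists>p. coeff_left n P c p \<noteq> 0) \<or> (\<exists>y. coeff_right n m Q c y \<noteq> 0)"
    using p by (auto simp: coeff_left_def coeff_right_def)
qed (auto simp: coeff_left_def coeff_right_def split: if_splits)

lemma join_coeffs_extend:
  assumes cP: "cP \<in> LP_coeffs T n P" and cQ: "cQ \<in> LP_coeffs T m Q"
  shows "\<exists>c \<in> LP_coeffs T (n + m + 1) J. coeff_left n P c = cP \<and> coeff_right n m Q c = cQ"
proof -
  let ?LP = "lattice_pts n P" and ?LQ = "lattice_pts m Q"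
  define unshift where "unshift r j = (if j < m then r (n + j) else 0)" for r :: "nat \<Rightarrow> nat" and j
  define c where "c r = (if r \<in> ?LP then cP r else if r \<in> embR_exp n m ` ?LQ then cQ (unshift r) else 0)"
    for r
  have unshift: "unshift (embR_exp n m y) = y" if "y \<in> ?LQ" for y
    using lattice_pts_supp_lt[OF that] by (auto simp: unshift_def embR_exp_def supp_lt_def)
  have not_left: "embR_exp n m y \<notin> ?LP" for y
  proof
    assume "embR_exp n m y \<in> ?LP"
    then have "embR_exp n m y (n + m) = 0"
      using lattice_pts_supp_lt unfolding supp_lt_def by (metis le_add1)
    then show False by (simp add: embR_exp_def)
  qed
  have "c \<in> LP_coeffs T (n + m + 1) J"
    unfolding LP_coeffs_def lattice_pts_J c_def by auto
  moreover have "coeff_left n P c = cP"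
    using cP by (auto simp: coeff_left_def c_def LP_coeffs_def)
  moreover have "coeff_right n m Q c = cQ"
    using cQ by (auto simp: coeff_right_def c_def LP_coeffs_def not_left unshift)
  ultimately show ?thesis by blast
qed

lemma finite_J: "finite (lattice_pts (n + m + 1) J)"
  unfolding lattice_pts_J using finite_P finite_Q by simp

lemma nonempty_J: "lattice_pts (n + m + 1) J \<noteq> {}"
  unfolding lattice_pts_J using nonempty_P by simp

lemma join_count_le_Nmax_join:
  fixes cP cQ :: "(nat \<Rightarrow> nat) \<Rightarrow> 'a::{finite,field}"
  assumes cP: "cP \<in> LP_coeffs TYPE('a) n P" and cQ: "cQ \<in> LP_coeffs TYPE('a) m Q"
    and nonzero: "(\<exists>p. cP p \<noteq> 0) \<or> (\<exists>y. cQ y \<noteq> 0)"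
  shows "join_count (CARD('a) - 1) ((CARD('a) - 1) ^ n) ((CARD('a) - 1) ^ m)
           (card (zeros n P cP)) (card (zeros m Q cQ)) \<le> int (Nmax TYPE('a) (n + m + 1) J)"
proof -
  obtain c where c: "c \<in> LP_coeffs TYPE('a) (n + m + 1) J" "coeff_left n P c = cP" "coeff_right n m Q c = cQ"
    using join_coeffs_extend[OF cP cQ] by blast
  then have "\<exists>p. c p \<noteq> 0"
    using LP_coeffs_join_nonzero_iff nonzero by blast
  then have "card (zeros (n + m + 1) J c) \<le> Nmax TYPE('a) (n + m + 1) J"
    using card_zeros_le_Nmax[OF finite_J nonempty_J c(1)] by blast
  then show ?thesis
    using card_zeros_join[OF lattice_pts_J finite_P finite_Q, of c] c(2,3) by simp
qed

lemma Nmax_join_le: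
  "int (Nmax TYPE('a::{finite,field}) (n + m + 1) J) \<le>
    join_max_count (CARD('a) - 1) ((CARD('a) - 1) ^ n) ((CARD('a) - 1) ^ m)
      (Nmax TYPE('a) n P) (Nmax TYPE('a) m Q)"
proof -
  define k where "k = CARD('a) - 1"
  define A B where "A = k ^ n" and "B = k ^ m"
  define NP NQ where "NP = Nmax TYPE('a) n P" and "NQ = Nmax TYPE('a) m Q"
  obtain c :: "(nat \<Rightarrow> nat) \<Rightarrow> 'a" where c: "c \<in> LP_coeffs TYPE('a) (n + m + 1) J" "\<exists>p. c p \<noteq> 0"
    "card (zeros (n + m + 1) J c) = Nmax TYPE('a) (n + m + 1) J"
    using Nmax_attained[OF finite_J nonempty_J] by blast
  define a where "a = card (zeros n P (coeff_left n P c))"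
  define b where "b = card (zeros m Q (coeff_right n m Q c))"
  have count_eq: "int (Nmax TYPE('a) (n + m + 1) J) = join_count k A B a b"
    using card_zeros_join[OF lattice_pts_J finite_P finite_Q, of c] c(3)
    by (simp add: a_def b_def k_def A_def B_def)
  have "NP \<le> A" "NQ \<le> B"
    using Nmax_le_card_torus finite_P nonempty_P finite_Q nonempty_Q
    unfolding NP_def NQ_def A_def B_def k_def by blast+
  have a: "if \<exists>p. coeff_left n P c p \<noteq> 0 then a \<le> NP else a = A"
    unfolding a_def NP_def A_def k_def
    using finite_P nonempty_P coeff_left_in_LP_coeffs by (rule card_zeros_cases)
  have b: "if \<exists>y. coeff_right n m Q c y \<noteq> 0 then b \<le> NQ else b = B"
    unfolding b_def NQ_def B_def k_def
    using finite_Q nonempty_Q coeff_right_in_LP_coeffs by (rule card_zeros_cases)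
  have "(\<exists>p. coeff_left n P c p \<noteq> 0) \<or> (\<exists>y. coeff_right n m Q c y \<noteq> 0)"
    using LP_coeffs_join_nonzero_iff[OF c(1)] c(2) by blast
  then have "join_count k A B a b \<le> join_max_count k A B NP NQ"
    by (rule join_count_le_join_max_count[OF a b _ \<open>NP \<le> A\<close> \<open>NQ \<le> B\<close>])
  then show ?thesis
    unfolding count_eq k_def A_def B_def NP_def NQ_def .
qed

lemma Nmax_join:
  "int (Nmax TYPE('a::{finite,field}) (n + m + 1) J) =
    join_max_count (CARD('a) - 1) ((CARD('a) - 1) ^ n) ((CARD('a) - 1) ^ m)
      (Nmax TYPE('a) n P) (Nmax TYPE('a) m Q)"
proof (rule antisym[OF Nmax_join_le])
  let ?k = "CARD('a) - 1"
  let ?f = "join_count ?k (?k ^ n) (?k ^ m)" and ?NJ = "int (Nmax TYPE('a) (n + m + 1) J)"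
  have zero_P: "(\<lambda>_. 0 :: 'a) \<in> LP_coeffs TYPE('a) n P" "card (zeros n P (\<lambda>_. 0 :: 'a)) = ?k ^ n"
    and zero_Q: "(\<lambda>_. 0 :: 'a) \<in> LP_coeffs TYPE('a) m Q" "card (zeros m Q (\<lambda>_. 0 :: 'a)) = ?k ^ m"
    by (simp_all add: LP_coeffs_def zeros_zero_coeffs card_torus)
  obtain cP0 cPmax :: "(nat \<Rightarrow> nat) \<Rightarrow> 'a" where
    cP0: "cP0 \<in> LP_coeffs TYPE('a) n P" "\<exists>p. cP0 p \<noteq> 0" "card (zeros n P cP0) = 0" and
    cPmax: "cPmax \<in> LP_coeffs TYPE('a) n P" "\<exists>p. cPmax p \<noteq> 0" "card (zeros n P cPmax) = Nmax TYPE('a) n P"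
    using exists_zero_free[OF finite_P nonempty_P] Nmax_attained[OF finite_P nonempty_P] by blast
  obtain cQ0 cQmax :: "(nat \<Rightarrow> nat) \<Rightarrow> 'a" where
    cQ0: "cQ0 \<in> LP_coeffs TYPE('a) m Q" "\<exists>p. cQ0 p \<noteq> 0" "card (zeros m Q cQ0) = 0" and
    cQmax: "cQmax \<in> LP_coeffs TYPE('a) m Q" "\<exists>p. cQmax p \<noteq> 0" "card (zeros m Q cQmax) = Nmax TYPE('a) m Q"
    using exists_zero_free[OF finite_Q nonempty_Q] Nmax_attained[OF finite_Q nonempty_Q] by blast
  have "?f 0 0 \<le> ?NJ"
    using join_count_le_Nmax_join[OF cP0(1) cQ0(1) disjI1[OF cP0(2)]] unfolding cP0(3) cQ0(3) .
  moreover have "?f (Nmax TYPE('a) n P) (?k ^ m) \<le> ?NJ"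
    using join_count_le_Nmax_join[OF cPmax(1) zero_Q(1) disjI1[OF cPmax(2)]] unfolding cPmax(3) zero_Q(2) .
  moreover have "?f (?k ^ n) (Nmax TYPE('a) m Q) \<le> ?NJ"
    using join_count_le_Nmax_join[OF zero_P(1) cQmax(1) disjI2[OF cQmax(2)]] unfolding cQmax(3) zero_P(2) .
  moreover have "?f (Nmax TYPE('a) n P) (Nmax TYPE('a) m Q) \<le> ?NJ"
    using join_count_le_Nmax_join[OF cPmax(1) cQmax(1) disjI1[OF cPmax(2)]] unfolding cPmax(3) cQmax(3) .
  ultimately show "join_max_count ?k (?k ^ n) (?k ^ m) (Nmax TYPE('a) n P) (Nmax TYPE('a) m Q) \<le> ?NJ"
    unfolding join_max_count_def by (simp only: max.bounded_iff)
qed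

end

lemma one_less_card_field: "1 < CARD('a::{finite,field})"
proof -
  have "card {0, 1 :: 'a} \<le> CARD('a)"
    by (rule card_mono) simp_all
  then show ?thesis by simp
qed

lemma delta_eq:
  "delta TYPE('a::{finite,field}) d S = 1 - real (Nmax TYPE('a) d S) / real ((CARD('a) - 1) ^ d)"
proof -
  have nonzero: "real ((CARD('a) - 1) ^ d) \<noteq> 0"
    using one_less_card_field[where 'a='a] by simp
  show ?thesis
    unfolding delta_def diff_divide_distrib divide_self[OF nonzero] ..
qed

lemma join_max_count_density:
  assumes "0 < k" "0 < A" "0 < B"
  shows "1 - real_of_int (join_max_count k A B NP NQ) / (real k * real A * real B) =
    min (min (1 - 1 / real k) (1 - real NP / real A))
        (min (1 - real NQ / real B)
             ((1 - real NP / real A) + (1 - real NQ / real B)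
              - (1 - real NP / real A) * (1 - real NQ / real B) * (real k + 1) / real k))"
proof -
  define D where "D = real k * real A * real B"
  have "D > 0"
    using assms by (simp add: D_def)
  have one_minus_max: "1 - max s t / D = min (1 - s / D) (1 - t / D)" for s t
    using \<open>D > 0\<close> by (simp add: max_divide_distrib_right; simp add: max_def min_def)
  have "1 - real_of_int (join_count k A B 0 0) / D = 1 - 1 / real k"
    and "1 - real_of_int (join_count k A B NP B) / D = 1 - real NP / real A"
    and "1 - real_of_int (join_count k A B A NQ) / D = 1 - real NQ / real B"
    and "1 - real_of_int (join_count k A B NP NQ) / D = (1 - real NP / real A) + (1 - real NQ / real B)
          - (1 - real NP / real A) * (1 - real NQ / real B) * (real k + 1) / real k"
    using assms by (simp_all add: D_def join_count_def field_simps)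
  then show ?thesis
    unfolding join_max_count_def of_int_max D_def[symmetric] one_minus_max by simp
qed

theorem mainTheorem4:
  fixes P Q :: "(nat \<Rightarrow> real) set" and n m :: nat
  assumes "CARD('a::{finite,field}) \<ge> 3"
    and "integral_polytope n P" and "P \<subseteq> box CARD('a) n"
    and "integral_polytope m Q" and "Q \<subseteq> box CARD('a) m"
  shows "int (Nmax TYPE('a) (n + m + 1) (join n m P Q)) =
           max (max (int ((CARD('a) - 1) ^ (n + m)))
                    (int (Nmax TYPE('a) n P * (CARD('a) - 1) ^ (m + 1))))
               (max (int (Nmax TYPE('a) m Q * (CARD('a) - 1) ^ (n + 1)))
                    ((int CARD('a) - 1) * int (Nmax TYPE('a) n P) * int (Nmax TYPE('a) m Q)
                     + (int ((CARD('a) - 1) ^ n) - int (Nmax TYPE('a) n P))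
                       * (int ((CARD('a) - 1) ^ m) - int (Nmax TYPE('a) m Q))))
       \<and> delta TYPE('a) (n + m + 1) (join n m P Q) =
           min (min (1 - 1 / (real CARD('a) - 1)) (delta TYPE('a) n P))
               (min (delta TYPE('a) m Q)
                    (delta TYPE('a) n P + delta TYPE('a) m Q
                     - delta TYPE('a) n P * delta TYPE('a) m Q * real CARD('a) / (real CARD('a) - 1)))"
proof -
  define k where "k = CARD('a) - 1"
  define NP NQ where "NP = Nmax TYPE('a) n P" and "NQ = Nmax TYPE('a) m Q"
  have "2 \<le> k" and card_eq: "int CARD('a) = int k + 1" "real CARD('a) = real k + 1"
    using assms(1) by (simp_all add: k_def of_nat_diff)
  have supp_P: "\<forall>p\<in>P. supp_lt n p" and supp_Q: "\<forall>y\<in>Q. supp_lt m y"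
    using assms(3,5) box_supp_lt by blast+
  have N: "int (Nmax TYPE('a) (n + m + 1) (join n m P Q)) = join_max_count k (k ^ n) (k ^ m) NP NQ"
    unfolding k_def NP_def NQ_def
    by (rule Nmax_join[OF lattice_pts_join[OF integral_polytope_conv_eq[OF assms(2)] supp_P
          integral_polytope_conv_eq[OF assms(4)] supp_Q] finite_lattice_pts[OF assms(3)]
          finite_lattice_pts[OF assms(5)] lattice_pts_nonempty[OF assms(2,3)] lattice_pts_nonempty[OF assms(4,5)]])
  have "delta TYPE('a) (n + m + 1) (join n m P Q)
      = 1 - real_of_int (join_max_count k (k ^ n) (k ^ m) NP NQ) / (real k * real (k ^ n) * real (k ^ m))"
    unfolding delta_eq k_def[symmetric] N[symmetric] by (simp add: power_add mult_ac)
  also have "\<dots> = min (min (1 - 1 / real k) (delta TYPE('a) n P))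
        (min (delta TYPE('a) m Q) (delta TYPE('a) n P + delta TYPE('a) m Q
          - delta TYPE('a) n P * delta TYPE('a) m Q * (real k + 1) / real k))"
    unfolding delta_eq k_def[symmetric] NP_def[symmetric] NQ_def[symmetric]
    using \<open>2 \<le> k\<close> by (intro join_max_count_density) simp_all
  finally show ?thesis
    using N unfolding k_def[symmetric] NP_def[symmetric] NQ_def[symmetric] card_eq
    by (simp add: join_max_count_def join_count_def power_add algebra_simps)
qed

end
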